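(* Let $n\ge2$, $d_1,\dots,d_n\ge2$, and let $\rho$ be a pure state (rank-one density operator) on $\mathbb{C}^{d_1}\otimes\cdots\otimes\mathbb{C}^{d_n}$. Let $T^{(12\cdots n)}$ be the vector with entries $t_{u_1,\dots,u_n}=\operatorname{tr}\big(\rho\,(A^{(1)}_{u_1})^\dagger\otimes\cdots\otimes(A^{(n)}_{u_n})^\dagger\big)$ for all $u_s\in\{1,\dots,d_s^2-1\}$, $s=1,\dots,n$. Then $$\|T^{(12\cdots n)}\|^2\le\frac{d_1\cdots d_n\big(n-1-\sum_{s=1}^n\frac{1}{d_s^2}\big)+1}{n-1}.$$
   Context: Generalized Pauli operators: for an integer $d\ge2$, let $\omega$ be a fixed primitive $d$-th root of unity and $E_{m,j}$ the $d\times d$ matrix units (indices modulo $d$). Writing $u\in\{0,\dots,d^2-1\}$ uniquely as $u=di+j$ with $0\le i,j\le d-1$, set $A_u=\sum_{m=0}^{d-1}\omega^{im}E_{m,m+j}$; so $A_0=I_d$ and $\operatorname{tr}(A_uA_v^\dagger)=d\delta_{uv}$. $A^{(s)}_u$ denotes these for $d=d_s$. $\|v\|=\sqrt{v^\dagger v}$. *)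

theory Defs
  imports Complex_Main "HOL-Library.FuncSet"
begin

text \<open>Generalized Pauli operator A_u of dimension d (w.r.t. the root of unity w),
  given by its matrix entries: for u = d*i + j, (A_u)_{m,c} = w^(i*m) if c = m + j (mod d), else 0.
  Indices m, c range over {0..<d}.\<close>
definition gpauli :: "complex \<Rightarrow> nat \<Rightarrow> nat \<Rightarrow> nat \<Rightarrow> nat \<Rightarrow> complex" where
  "gpauli w d u m c = (if c = (m + u mod d) mod d then w ^ ((u div d) * m) else 0)"

definition primitive_root :: "complex \<Rightarrow> nat \<Rightarrow> bool" where
  "primitive_root w d \<longleftrightarrow> w ^ d = 1 \<and> (\<forall>k. 0 < k \<and> k < d \<longrightarrow> w ^ k \<noteq> 1)"

text \<open>Computational basis index tuples of C^{d_0} x ... x C^{d_{n-1}} (parties indexed 0..n-1).\<close>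
definition basis_idx :: "nat \<Rightarrow> (nat \<Rightarrow> nat) \<Rightarrow> (nat \<Rightarrow> nat) set" where
  "basis_idx n d = PiE {..<n} (\<lambda>s. {..<d s})"

definition pure_state :: "nat \<Rightarrow> (nat \<Rightarrow> nat) \<Rightarrow> ((nat \<Rightarrow> nat) \<Rightarrow> (nat \<Rightarrow> nat) \<Rightarrow> complex) \<Rightarrow> bool" where
  "pure_state n d rho \<longleftrightarrow> (\<exists>psi :: (nat \<Rightarrow> nat) \<Rightarrow> complex.
     (\<Sum>k\<in>basis_idx n d. (cmod (psi k))\<^sup>2) = 1 \<and>
     (\<forall>k\<in>basis_idx n d. \<forall>l\<in>basis_idx n d. rho k l = psi k * cnj (psi l)))"

text \<open>Correlation tensor entry t_u = tr(rho (A_{u_0}^dagger x ... x A_{u_{n-1}}^dagger))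
  = sum_{k,l} rho_{k,l} * prod_s conj((A_{u_s})_{k_s,l_s}).\<close>
definition corr_entry :: "nat \<Rightarrow> (nat \<Rightarrow> nat) \<Rightarrow> (nat \<Rightarrow> complex) \<Rightarrow>
    ((nat \<Rightarrow> nat) \<Rightarrow> (nat \<Rightarrow> nat) \<Rightarrow> complex) \<Rightarrow> (nat \<Rightarrow> nat) \<Rightarrow> complex" where
  "corr_entry n d w rho u = (\<Sum>k\<in>basis_idx n d. \<Sum>l\<in>basis_idx n d.
      rho k l * (\<Prod>s<n. cnj (gpauli (w s) (d s) (u s) (k s) (l s))))"

definition corr_idx :: "nat \<Rightarrow> (nat \<Rightarrow> nat) \<Rightarrow> (nat \<Rightarrow> nat) set" where
  "corr_idx n d = PiE {..<n} (\<lambda>s. {1..<(d s)^2})"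

end

theory Submission
  imports Defs "HOL-Analysis.Convex"
begin

(* Let D = d_1 ... d_n and let u range over all of {0..<d_1^2} x ... x {0..<d_n^2}.
   Completeness of the Pauli basis, sum_x conj (A_x)_ab (A_x)_a'b' = d [a = a'] [b = b'],
   turns the sum of |t_u|^2 over all u into D tr(rho^2) = D, and the sum over the u with
   u_s = 0 into (D / d_s) times the purity of the marginal of rho on the parties other
   than s.  For a pure state this equals the purity of the marginal rho_s on party s,
   which is at least 1 / d_s by Cauchy-Schwarz on its diagonal.  Every u other than 0
   has at most n - 1 vanishing coordinates and t_0 = tr rho = 1, so double counting gives
   sum_s D / d_s^2 <= (n - 1) (D - |T|^2) + 1, which rearranges to the claim. *)

lemma sum_lessThan_mult_split:
  fixes f :: "nat \<Rightarrow> 'a::comm_monoid_add"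
  shows "(\<Sum>x<m * d. f x) = (\<Sum>i<m. \<Sum>j<d. f (i * d + j))"
proof -
  have "(\<Sum>j<d. f (i * d + j)) = (\<Sum>x\<in>{i * d..<i * d + d}. f x)" for i
    by (simp add: sum.atLeastLessThan_shift_0[of f] lessThan_atLeast0 comp_def)
  then show ?thesis
    by (simp add: sum.nat_group)
qed

lemma sum_add_mod_lessThan:
  fixes f :: "nat \<Rightarrow> 'a::comm_monoid_add"
  assumes "a < d"
  shows "(\<Sum>j<d. f ((a + j) mod d)) = (\<Sum>c<d. f c)"
proof -
  have inj: "inj_on (\<lambda>j. (a + j) mod d) {..<d}"
    using assms by (intro inj_onI) (auto simp: mod_if split: if_splits)
  moreover have "(\<lambda>j. (a + j) mod d) ` {..<d} = {..<d}"
    using assms inj by (intro endo_inj_surj) auto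
  ultimately show ?thesis
    by (intro sum.reindex_bij_betw bij_betw_imageI)
qed

lemma prod_if_zero:
  fixes f :: "'a \<Rightarrow> 'b::comm_semiring_1"
  assumes "finite A"
  shows "(\<Prod>r\<in>A. if P r then f r else 0) = (if \<forall>r\<in>A. P r then \<Prod>r\<in>A. f r else 0)"
proof (cases "\<forall>r\<in>A. P r")
  case False
  then have "\<exists>r\<in>A. (if P r then f r else 0) = 0" by auto
  with assms have "(\<Prod>r\<in>A. if P r then f r else 0) = 0" by (rule prod_zero)
  with False show ?thesis by auto
qed simp

lemma sum_delta_conj:
  fixes f :: "'a \<Rightarrow> 'c::comm_monoid_add"
  assumes "finite A" "a \<in> A"
  shows "(\<Sum>x\<in>A. if a = x \<and> Q x then f x else 0) = (if Q a then f a else 0)"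
proof -
  have "(\<Sum>x\<in>A. if a = x \<and> Q x then f x else 0) = (\<Sum>x\<in>A. if a = x then (if Q a then f a else 0) else 0)"
    by (rule sum.cong) auto
  then show ?thesis using assms by simp
qed

lemma sum_sum_delta:
  fixes f :: "'a \<Rightarrow> 'b \<Rightarrow> 'c::comm_monoid_add"
  assumes "finite A" "finite B" "a \<in> A" "b \<in> B"
  shows "(\<Sum>x\<in>A. \<Sum>y\<in>B. if a = x \<and> b = y \<and> P x y then f x y else 0) = (if P a b then f a b else 0)"
proof -
  have "(\<Sum>y\<in>B. if a = x \<and> b = y \<and> P x y then f x y else 0) = (if a = x \<and> P x b then f x b else 0)" for x
    using sum_delta_conj[OF assms(2,4), of "\<lambda>y. a = x \<and> P x y" "f x"] by (simp add: conj_left_commute)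
  then show ?thesis
    using sum_delta_conj[OF assms(1,3), of "\<lambda>x. P x b" "\<lambda>x. f x b"] by simp
qed

lemma of_real_sum_cmod_sq: "of_real (\<Sum>x\<in>A. (cmod (f x))\<^sup>2) = (\<Sum>x\<in>A. f x * cnj (f x))"
  by (simp add: complex_norm_square flip: of_real_power)

lemma PiE_fix_coordinate:
  assumes "s \<in> I" "a \<in> A s"
  shows "{u \<in> PiE I A. u s = a} = PiE I (\<lambda>r. if r = s then {a} else A r)"
proof (intro set_eqI iffI)
  fix u assume u: "u \<in> PiE I (\<lambda>r. if r = s then {a} else A r)"
  have "PiE I (\<lambda>r. if r = s then {a} else A r) \<subseteq> PiE I A"
    using assms(2) by (intro PiE_mono) auto
  moreover have "u s = a" using PiE_mem[OF u assms(1)] by simp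
  ultimately show "u \<in> {u \<in> PiE I A. u s = a}"
    using u by blast
qed (auto simp: PiE_iff)

lemma primitive_root_power_inj:
  assumes "primitive_root w d" "a < d" "b < d" "w ^ a = w ^ b"
  shows "a = b"
proof -
  have "w ^ d = 1" and no_smaller: "\<And>k. 0 < k \<Longrightarrow> k < d \<Longrightarrow> w ^ k \<noteq> 1"
    using assms(1) by (auto simp: primitive_root_def)
  then have "w \<noteq> 0" using assms(2) by (auto simp: power_0_left)
  have power_diff: "w ^ (j - i) = 1" if "i < j" "w ^ i = w ^ j" for i j
  proof -
    have "w ^ i * w ^ (j - i) = w ^ j" using \<open>i < j\<close> by (simp flip: power_add)
    then show ?thesis using that(2) \<open>w \<noteq> 0\<close> by simp
  qed
  show ?thesis
    using power_diff no_smaller assms(2-4) by (metis linorder_neqE_nat zero_less_diff less_imp_diff_less)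
qed

lemma primitive_root_cnj_mult:
  assumes "primitive_root w d" "0 < d"
  shows "cnj w * w = 1"
proof -
  have "cmod w ^ d = 1" using assms(1) by (metis norm_one norm_power primitive_root_def)
  then have "cmod w = 1" using assms(2) power_eq_imp_eq_base[of "cmod w" d 1] by simp
  then show ?thesis by (metis complex_norm_square mult.commute of_real_1 power_one)
qed

lemma sum_powers_primitive_root:
  assumes "primitive_root w d" "a < d" "b < d"
  shows "(\<Sum>i<d. (cnj w ^ a * w ^ b) ^ i) = (if a = b then of_nat d else 0)"
proof -
  define z where "z = cnj w ^ a * w ^ b"
  have unit: "cnj w * w = 1" using primitive_root_cnj_mult assms by simp
  have "w ^ a * z = (cnj w * w) ^ a * w ^ b"
    unfolding z_def by (simp add: power_mult_distrib ac_simps)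
  then have shift: "w ^ a * z = w ^ b"
    by (simp add: unit)
  have "(\<Sum>i<d. z ^ i) = (if a = b then of_nat d else 0)"
  proof (cases "a = b")
    case True
    then have "z = 1" unfolding z_def by (simp add: unit flip: power_mult_distrib)
    then show ?thesis using True by simp
  next
    case False
    have "z ^ d = (cnj w ^ d) ^ a * (w ^ d) ^ b"
      unfolding z_def by (simp add: power_mult_distrib mult.commute flip: power_mult)
    then have "z ^ d = 1"
      using assms(1) by (simp add: primitive_root_def flip: complex_cnj_power)
    moreover have "z \<noteq> 1" using shift primitive_root_power_inj[OF assms] False by auto
    ultimately show ?thesis using False by (simp add: geometric_sum)
  qed
  then show ?thesis by (simp add: z_def)
qed

lemma gpauli_identity: "a < d \<Longrightarrow> gpauli w d 0 a b = (if b = a then 1 else 0)"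
  by (simp add: gpauli_def)

lemma gpauli_completeness:
  assumes "primitive_root w d" "a < d" "b < d" "a' < d" "b' < d"
  shows "(\<Sum>x<d^2. cnj (gpauli w d x a b) * gpauli w d x a' b') = (if a = a' \<and> b = b' then of_nat d else 0)"
proof -
  have entry: "gpauli w d (i * d + j) a b = (if b = (a + j) mod d then w ^ (i * a) else 0)"
    if "j < d" for i j a b
    using that by (simp add: gpauli_def)
  have product: "cnj (gpauli w d (i * d + j) a b) * gpauli w d (i * d + j) a' b'
      = (if b = (a + j) mod d \<and> b' = (a' + j) mod d then (cnj w ^ a * w ^ a') ^ i else 0)"
    if "j < d" for i j
    unfolding entry[OF that] by (simp add: power_mult_distrib mult.commute flip: power_mult)
  have "(\<Sum>x<d^2. cnj (gpauli w d x a b) * gpauli w d x a' b')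
      = (\<Sum>j<d. \<Sum>i<d. cnj (gpauli w d (i * d + j) a b) * gpauli w d (i * d + j) a' b')"
    unfolding power2_eq_square sum_lessThan_mult_split by (rule sum.swap)
  also have "\<dots> = (\<Sum>j<d. if b = (a + j) mod d \<and> b' = (a' + j) mod d
                         then \<Sum>i<d. (cnj w ^ a * w ^ a') ^ i else 0)"
    by (intro sum.cong refl) (auto simp: product)
  also have "\<dots> = (\<Sum>j<d. if b = (a + j) mod d \<and> b' = (a + j) mod d \<and> a = a' then of_nat d else 0)"
    using sum_powers_primitive_root[OF assms(1,2,4)] by (intro sum.cong refl) auto
  also have "\<dots> = (\<Sum>c<d. if b = c \<and> b' = c \<and> a = a' then of_nat d else 0)"
    by (rule sum_add_mod_lessThan[OF assms(2), where f = "\<lambda>c. if b = c \<and> b' = c \<and> a = a' then of_nat d else 0"])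
  also have "\<dots> = (if a = a' \<and> b = b' then of_nat d else 0)"
    using assms(3) by (cases "b = b'") (auto intro!: sum.neutral)
  finally show ?thesis .
qed

lemma finite_basis_idx: "finite (basis_idx n d)"
  unfolding basis_idx_def by (simp add: finite_PiE)

lemma basis_idx_less: "k \<in> basis_idx n d \<Longrightarrow> r < n \<Longrightarrow> k r < d r"
  unfolding basis_idx_def by (auto dest: PiE_mem)

lemma basis_idx_eqI:
  "k \<in> basis_idx n d \<Longrightarrow> k' \<in> basis_idx n d \<Longrightarrow> (\<And>r. r < n \<Longrightarrow> k r = k' r) \<Longrightarrow> k = k'"
  unfolding basis_idx_def by (rule PiE_ext) auto

lemma corr_entry_times_cnj_sum_PiE:
  assumes "\<And>r. r < n \<Longrightarrow> finite (U r)"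
  shows "(\<Sum>u\<in>PiE {..<n} U. corr_entry n d w rho u * cnj (corr_entry n d w rho u)) =
    (\<Sum>k\<in>basis_idx n d. \<Sum>l\<in>basis_idx n d. \<Sum>k'\<in>basis_idx n d. \<Sum>l'\<in>basis_idx n d.
       rho k l * cnj (rho k' l') *
       (\<Prod>r<n. \<Sum>x\<in>U r. cnj (gpauli (w r) (d r) x (k r) (l r)) * gpauli (w r) (d r) x (k' r) (l' r)))"
proof -
  let ?K = "basis_idx n d"
  let ?A = "\<lambda>r x a b. gpauli (w r) (d r) x a b"
  have "corr_entry n d w rho u * cnj (corr_entry n d w rho u) =
    (\<Sum>k\<in>?K. \<Sum>l\<in>?K. \<Sum>k'\<in>?K. \<Sum>l'\<in>?K. rho k l * cnj (rho k' l') *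
       (\<Prod>r<n. cnj (?A r (u r) (k r) (l r)) * ?A r (u r) (k' r) (l' r)))" for u
  proof -
    have "corr_entry n d w rho u * cnj (corr_entry n d w rho u) =
      (\<Sum>k\<in>?K. \<Sum>l\<in>?K. \<Sum>k'\<in>?K. \<Sum>l'\<in>?K.
        (rho k l * (\<Prod>r<n. cnj (?A r (u r) (k r) (l r)))) * cnj (rho k' l' * (\<Prod>r<n. cnj (?A r (u r) (k' r) (l' r)))))"
      unfolding corr_entry_def cnj_sum sum_product by (rule sum.cong[OF refl], rule sum.swap)
    also have "\<dots> = (\<Sum>k\<in>?K. \<Sum>l\<in>?K. \<Sum>k'\<in>?K. \<Sum>l'\<in>?K. rho k l * cnj (rho k' l') *
       (\<Prod>r<n. cnj (?A r (u r) (k r) (l r)) * ?A r (u r) (k' r) (l' r)))"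
      by (simp add: prod.distrib mult.assoc mult.left_commute)
    finally show ?thesis .
  qed
  then have "(\<Sum>u\<in>PiE {..<n} U. corr_entry n d w rho u * cnj (corr_entry n d w rho u)) =
    (\<Sum>k\<in>?K. \<Sum>l\<in>?K. \<Sum>k'\<in>?K. \<Sum>l'\<in>?K. rho k l * cnj (rho k' l') *
       (\<Sum>u\<in>PiE {..<n} U. \<Prod>r<n. cnj (?A r (u r) (k r) (l r)) * ?A r (u r) (k' r) (l' r)))"
    by (simp only: sum.swap[of _ "PiE {..<n} U"] sum_distrib_left)
  also have "\<dots> = (\<Sum>k\<in>?K. \<Sum>l\<in>?K. \<Sum>k'\<in>?K. \<Sum>l'\<in>?K. rho k l * cnj (rho k' l') *
       (\<Prod>r<n. \<Sum>x\<in>U r. cnj (?A r x (k r) (l r)) * ?A r x (k' r) (l' r)))"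
    using assms by (subst prod_sum_PiE) auto
  finally show ?thesis .
qed

lemma prod_gpauli_pair_sum_identity_on:
  assumes roots: "\<forall>r<n. primitive_root (w r) (d r)"
    and K: "k \<in> basis_idx n d" "l \<in> basis_idx n d" "k' \<in> basis_idx n d" "l' \<in> basis_idx n d"
  shows "(\<Prod>r<n. \<Sum>x\<in>(if r \<in> S then {0} else {..<d r ^ 2}).
            cnj (gpauli (w r) (d r) x (k r) (l r)) * gpauli (w r) (d r) x (k' r) (l' r))
    = (if \<forall>r<n. if r \<in> S then k r = l r \<and> k' r = l' r else k r = k' r \<and> l r = l' r
       then of_nat (\<Prod>r\<in>{..<n} - S. d r) else 0)"
proof -
  let ?agree = "\<lambda>r. if r \<in> S then k r = l r \<and> k' r = l' r else k r = k' r \<and> l r = l' r"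
  let ?c = "\<lambda>r. if r \<in> S then 1 else of_nat (d r) :: complex"
  have "(\<Sum>x\<in>(if r \<in> S then {0} else {..<d r ^ 2}).
          cnj (gpauli (w r) (d r) x (k r) (l r)) * gpauli (w r) (d r) x (k' r) (l' r))
      = (if ?agree r then ?c r else 0)" if "r < n" for r
  proof -
    have "k r < d r" "l r < d r" "k' r < d r" "l' r < d r" "primitive_root (w r) (d r)"
      using that roots K basis_idx_less by auto
    then show ?thesis
      by (cases "r \<in> S") (auto simp: gpauli_completeness gpauli_identity)
  qed
  then have "(\<Prod>r<n. \<Sum>x\<in>(if r \<in> S then {0} else {..<d r ^ 2}).
          cnj (gpauli (w r) (d r) x (k r) (l r)) * gpauli (w r) (d r) x (k' r) (l' r))
      = (\<Prod>r<n. if ?agree r then ?c r else 0)"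
    by (intro prod.cong) auto
  also have "\<dots> = (if \<forall>r\<in>{..<n}. ?agree r then \<Prod>r<n. ?c r else 0)"
    by (rule prod_if_zero) simp
  also have "(\<Prod>r<n. ?c r) = of_nat (\<Prod>r\<in>{..<n} - S. d r)"
    by (simp add: prod.If_cases Diff_eq)
  finally show ?thesis
    by (simp only: Ball_def lessThan_iff)
qed

lemma corr_entry_times_cnj_sum_identity_on:
  assumes roots: "\<forall>r<n. primitive_root (w r) (d r)"
  shows "(\<Sum>u\<in>PiE {..<n} (\<lambda>r. if r \<in> S then {0} else {..<d r ^ 2}).
            corr_entry n d w rho u * cnj (corr_entry n d w rho u)) =
    of_nat (\<Prod>r\<in>{..<n} - S. d r) *
    (\<Sum>k\<in>basis_idx n d. \<Sum>l\<in>basis_idx n d. \<Sum>k'\<in>basis_idx n d. \<Sum>l'\<in>basis_idx n d.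
       if \<forall>r<n. if r \<in> S then k r = l r \<and> k' r = l' r else k r = k' r \<and> l r = l' r
       then rho k l * cnj (rho k' l') else 0)"
proof -
  let ?K = "basis_idx n d"
  let ?agree = "\<lambda>k l k' l'. \<forall>r<n. if r \<in> S then k r = l r \<and> k' r = l' r else k r = k' r \<and> l r = l' r"
  let ?D = "of_nat (\<Prod>r\<in>{..<n} - S. d r) :: complex"
  have finite_factors: "finite (if r \<in> S then {0} else {..<d r ^ 2})" for r
    by simp
  have "(\<Sum>u\<in>PiE {..<n} (\<lambda>r. if r \<in> S then {0} else {..<d r ^ 2}).
            corr_entry n d w rho u * cnj (corr_entry n d w rho u)) =
    (\<Sum>k\<in>?K. \<Sum>l\<in>?K. \<Sum>k'\<in>?K. \<Sum>l'\<in>?K. rho k l * cnj (rho k' l') * (if ?agree k l k' l' then ?D else 0))"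
    unfolding corr_entry_times_cnj_sum_PiE[OF finite_factors]
    by (intro sum.cong refl) (simp only: prod_gpauli_pair_sum_identity_on[OF roots])
  also have "\<dots> = ?D * (\<Sum>k\<in>?K. \<Sum>l\<in>?K. \<Sum>k'\<in>?K. \<Sum>l'\<in>?K.
       if ?agree k l k' l' then rho k l * cnj (rho k' l') else 0)"
  proof -
    have "x * (if P then c else 0) = c * (if P then x else 0)" for x c :: complex and P
      by simp
    then show ?thesis
      unfolding sum_distrib_left by (intro sum.cong refl)
  qed
  finally show ?thesis .
qed

definition reduced_density ::
    "nat \<Rightarrow> (nat \<Rightarrow> nat) \<Rightarrow> nat \<Rightarrow> ((nat \<Rightarrow> nat) \<Rightarrow> complex) \<Rightarrow> nat \<Rightarrow> nat \<Rightarrow> complex" where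
  "reduced_density n d s psi a b = (\<Sum>k\<in>basis_idx n d. \<Sum>k'\<in>basis_idx n d.
     if k s = a \<and> k' s = b \<and> (\<forall>r<n. r \<noteq> s \<longrightarrow> k r = k' r) then psi k * cnj (psi k') else 0)"

text \<open>The right-hand side is the purity of the marginal of the pure state on the parties
  other than s, so this is the equality of the purities of complementary marginals.\<close>
lemma reduced_density_sum_sq:
  assumes "s < n"
  shows "(\<Sum>a<d s. \<Sum>b<d s. reduced_density n d s psi a b * cnj (reduced_density n d s psi a b)) =
    (\<Sum>k\<in>basis_idx n d. \<Sum>l\<in>basis_idx n d. \<Sum>k'\<in>basis_idx n d. \<Sum>l'\<in>basis_idx n d.
       if \<forall>r<n. if r = s then k r = l r \<and> k' r = l' r else k r = k' r \<and> l r = l' r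
       then psi k * cnj (psi l) * cnj (psi k' * cnj (psi l')) else 0)"
proof -
  let ?K = "basis_idx n d"
  let ?off = "\<lambda>k k'. \<forall>r<n. r \<noteq> s \<longrightarrow> k r = k' r"
  have "(\<Sum>a<d s. \<Sum>b<d s. reduced_density n d s psi a b * cnj (reduced_density n d s psi a b)) =
    (\<Sum>a<d s. \<Sum>b<d s. \<Sum>k\<in>?K. \<Sum>l\<in>?K. \<Sum>k'\<in>?K. \<Sum>l'\<in>?K.
      if k s = a \<and> k' s = b \<and> (?off k k' \<and> l s = a \<and> l' s = b \<and> ?off l l')
      then psi k * cnj (psi k') * (cnj (psi l) * psi l') else 0)"
    unfolding reduced_density_def cnj_sum sum_product by (intro sum.cong refl) auto
  also have "\<dots> = (\<Sum>k\<in>?K. \<Sum>l\<in>?K. \<Sum>k'\<in>?K. \<Sum>l'\<in>?K. \<Sum>a<d s. \<Sum>b<d s.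
      if k s = a \<and> k' s = b \<and> (?off k k' \<and> l s = a \<and> l' s = b \<and> ?off l l')
      then psi k * cnj (psi k') * (cnj (psi l) * psi l') else 0)"
    by (simp only: sum.swap[of _ "{..<d s}" ?K])
  also have "\<dots> = (\<Sum>k\<in>?K. \<Sum>l\<in>?K. \<Sum>k'\<in>?K. \<Sum>l'\<in>?K.
      if ?off k k' \<and> l s = k s \<and> l' s = k' s \<and> ?off l l'
      then psi k * cnj (psi k') * (cnj (psi l) * psi l') else 0)"
    using basis_idx_less assms by (intro sum.cong refl) (simp add: sum_sum_delta)
  also have "\<dots> = (\<Sum>k\<in>?K. \<Sum>l\<in>?K. \<Sum>k'\<in>?K. \<Sum>l'\<in>?K.
       if \<forall>r<n. if r = s then k r = l r \<and> k' r = l' r else k r = k' r \<and> l r = l' r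
       then psi k * cnj (psi l) * cnj (psi k' * cnj (psi l')) else 0)"
    using assms by (intro sum.cong refl if_cong) (auto simp: ac_simps)
  finally show ?thesis .
qed

lemma reduced_density_diag:
  assumes "s < n"
  shows "reduced_density n d s psi a a = of_real (\<Sum>k\<in>basis_idx n d. if k s = a then (cmod (psi k))\<^sup>2 else 0)"
proof -
  let ?K = "basis_idx n d"
  have "reduced_density n d s psi a a =
      (\<Sum>k\<in>?K. \<Sum>k'\<in>?K. if k = k' \<and> k s = a then psi k * cnj (psi k') else 0)"
    unfolding reduced_density_def
  proof (intro sum.cong refl if_cong)
    fix k k' assume "k \<in> ?K" "k' \<in> ?K"
    then show "(k s = a \<and> k' s = a \<and> (\<forall>r<n. r \<noteq> s \<longrightarrow> k r = k' r)) = (k = k' \<and> k s = a)"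
      using basis_idx_eqI[of k n d k'] by fastforce
  qed
  also have "\<dots> = (\<Sum>k\<in>?K. if k s = a then psi k * cnj (psi k) else 0)"
    by (intro sum.cong refl) (simp add: sum_delta_conj finite_basis_idx)
  finally show ?thesis
    by (simp add: complex_norm_square if_distrib[of of_real] flip: of_real_power cong: if_cong)
qed

lemma reduced_density_sum_sq_ge:
  assumes "s < n" and unit: "(\<Sum>k\<in>basis_idx n d. (cmod (psi k))\<^sup>2) = 1"
  shows "1 / real (d s) \<le> (\<Sum>a<d s. \<Sum>b<d s. (cmod (reduced_density n d s psi a b))\<^sup>2)"
proof -
  let ?K = "basis_idx n d"
  define p where "p a = (\<Sum>k\<in>?K. if k s = a then (cmod (psi k))\<^sup>2 else 0)" for a
  have "(\<Sum>a<d s. p a) = (\<Sum>k\<in>?K. \<Sum>a<d s. if k s = a then (cmod (psi k))\<^sup>2 else 0)"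
    unfolding p_def by (rule sum.swap)
  also have "\<dots> = 1"
    using basis_idx_less assms by simp
  finally have "1 \<le> (\<Sum>a<d s. (p a)\<^sup>2) * real (d s)"
    using sum_squared_le_sum_of_squares[of p "{..<d s}"] by simp
  then have "1 / real (d s) \<le> (\<Sum>a<d s. (p a)\<^sup>2)"
    by (cases "d s = 0") (auto simp: field_simps)
  also have "\<dots> = (\<Sum>a<d s. (cmod (reduced_density n d s psi a a))\<^sup>2)"
    unfolding reduced_density_diag[OF assms(1)] norm_of_real power2_abs p_def ..
  also have "\<dots> \<le> (\<Sum>a<d s. \<Sum>b<d s. (cmod (reduced_density n d s psi a b))\<^sup>2)"
    by (intro sum_mono member_le_sum) auto
  finally show ?thesis .
qed

lemma corr_entry_pure_sum_sq:
  assumes roots: "\<forall>r<n. primitive_root (w r) (d r)"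
  shows "(\<Sum>u\<in>PiE {..<n} (\<lambda>r. {..<d r ^ 2}). (cmod (corr_entry n d w (\<lambda>k l. psi k * cnj (psi l)) u))\<^sup>2)
    = (\<Prod>r<n. real (d r)) * (\<Sum>k\<in>basis_idx n d. (cmod (psi k))\<^sup>2)\<^sup>2"
proof -
  let ?K = "basis_idx n d"
  let ?t = "corr_entry n d w (\<lambda>k l. psi k * cnj (psi l))"
  have "of_real (\<Sum>u\<in>PiE {..<n} (\<lambda>r. {..<d r ^ 2}). (cmod (?t u))\<^sup>2) =
      (\<Sum>u\<in>PiE {..<n} (\<lambda>r. {..<d r ^ 2}). ?t u * cnj (?t u))"
    by (rule of_real_sum_cmod_sq)
  also have "\<dots> = of_nat (\<Prod>r<n. d r) * (\<Sum>k\<in>?K. \<Sum>l\<in>?K. \<Sum>k'\<in>?K. \<Sum>l'\<in>?K.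
       if \<forall>r<n. k r = k' r \<and> l r = l' r then psi k * cnj (psi l) * cnj (psi k' * cnj (psi l')) else 0)"
    using corr_entry_times_cnj_sum_identity_on[OF roots, where S = "{}"] by (simp only: empty_iff if_False Diff_empty)
  also have "(\<Sum>k\<in>?K. \<Sum>l\<in>?K. \<Sum>k'\<in>?K. \<Sum>l'\<in>?K.
       if \<forall>r<n. k r = k' r \<and> l r = l' r then psi k * cnj (psi l) * cnj (psi k' * cnj (psi l')) else 0)
    = (\<Sum>k\<in>?K. \<Sum>l\<in>?K. psi k * cnj (psi l) * cnj (psi k * cnj (psi l)))"
  proof (intro sum.cong refl)
    fix k l assume kl: "k \<in> ?K" "l \<in> ?K"
    have "(\<Sum>k'\<in>?K. \<Sum>l'\<in>?K.
        if \<forall>r<n. k r = k' r \<and> l r = l' r then psi k * cnj (psi l) * cnj (psi k' * cnj (psi l')) else 0)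
      = (\<Sum>k'\<in>?K. \<Sum>l'\<in>?K.
        if k = k' \<and> l = l' \<and> True then psi k * cnj (psi l) * cnj (psi k' * cnj (psi l')) else 0)"
      using kl basis_idx_eqI[of k n d] basis_idx_eqI[of l n d] by (intro sum.cong refl if_cong) auto
    also have "\<dots> = psi k * cnj (psi l) * cnj (psi k * cnj (psi l))"
      using kl by (simp only: sum_sum_delta finite_basis_idx if_True)
    finally show "(\<Sum>k'\<in>?K. \<Sum>l'\<in>?K.
        if \<forall>r<n. k r = k' r \<and> l r = l' r then psi k * cnj (psi l) * cnj (psi k' * cnj (psi l')) else 0)
      = psi k * cnj (psi l) * cnj (psi k * cnj (psi l))" .
  qed
  also have "\<dots> = (\<Sum>k\<in>?K. psi k * cnj (psi k))\<^sup>2"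
    by (simp add: power2_eq_square sum_product ac_simps)
  also have "\<dots> = of_real ((\<Sum>k\<in>?K. (cmod (psi k))\<^sup>2)\<^sup>2)"
    by (simp only: of_real_sum_cmod_sq of_real_power)
  also have "of_nat (\<Prod>r<n. d r) * \<dots> = of_real ((\<Prod>r<n. real (d r)) * (\<Sum>k\<in>?K. (cmod (psi k))\<^sup>2)\<^sup>2)"
    by simp
  finally show ?thesis
    by (simp only: of_real_eq_iff)
qed

lemma corr_entry_pure_sum_sq_vanishing_at:
  assumes roots: "\<forall>r<n. primitive_root (w r) (d r)" and "s < n"
  shows "(\<Sum>u\<in>PiE {..<n} (\<lambda>r. if r = s then {0} else {..<d r ^ 2}).
            (cmod (corr_entry n d w (\<lambda>k l. psi k * cnj (psi l)) u))\<^sup>2)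
    = (\<Prod>r\<in>{..<n} - {s}. real (d r)) * (\<Sum>a<d s. \<Sum>b<d s. (cmod (reduced_density n d s psi a b))\<^sup>2)"
proof -
  let ?t = "corr_entry n d w (\<lambda>k l. psi k * cnj (psi l))"
  let ?U = "\<lambda>r. if r = s then {0} else {..<d r ^ 2}"
  let ?M = "reduced_density n d s psi"
  have "of_real (\<Sum>u\<in>PiE {..<n} ?U. (cmod (?t u))\<^sup>2) = (\<Sum>u\<in>PiE {..<n} ?U. ?t u * cnj (?t u))"
    by (rule of_real_sum_cmod_sq)
  also have "\<dots> = of_nat (\<Prod>r\<in>{..<n} - {s}. d r) * (\<Sum>a<d s. \<Sum>b<d s. ?M a b * cnj (?M a b))"
    using corr_entry_times_cnj_sum_identity_on[OF roots, where S = "{s}"]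
    by (simp only: singleton_iff reduced_density_sum_sq[OF \<open>s < n\<close>])
  also have "\<dots> = of_real ((\<Prod>r\<in>{..<n} - {s}. real (d r)) * (\<Sum>a<d s. \<Sum>b<d s. (cmod (?M a b))\<^sup>2))"
    by (simp only: of_real_mult of_real_sum complex_norm_square of_real_prod of_real_of_nat_eq of_nat_prod)
  finally show ?thesis
    by (simp only: of_real_eq_iff)
qed

lemma pure_state_corr_entry:
  assumes "pure_state n d rho"
  obtains psi where "(\<Sum>k\<in>basis_idx n d. (cmod (psi k))\<^sup>2) = 1"
    and "corr_entry n d w rho = corr_entry n d w (\<lambda>k l. psi k * cnj (psi l))"
proof -
  obtain psi where unit: "(\<Sum>k\<in>basis_idx n d. (cmod (psi k))\<^sup>2) = 1"
    and rho: "\<forall>k\<in>basis_idx n d. \<forall>l\<in>basis_idx n d. rho k l = psi k * cnj (psi l)"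
    using assms unfolding pure_state_def by blast
  have "corr_entry n d w rho = corr_entry n d w (\<lambda>k l. psi k * cnj (psi l))"
    unfolding corr_entry_def using rho by (intro ext sum.cong refl) auto
  with unit show ?thesis by (rule that)
qed

lemma pure_state_dim_pos:
  assumes "pure_state n d rho" "r < n"
  shows "0 < d r"
proof (rule ccontr)
  assume "\<not> 0 < d r"
  then have "basis_idx n d = {}"
    using assms(2) unfolding basis_idx_def by (auto simp: PiE_eq_empty_iff)
  then show False
    using assms(1) unfolding pure_state_def by simp
qed

lemma pure_state_corr_entry_identity:
  assumes "pure_state n d rho" "\<forall>s<n. u s = 0"
  shows "corr_entry n d w rho u = 1"
proof -
  let ?K = "basis_idx n d"
  obtain psi where unit: "(\<Sum>k\<in>?K. (cmod (psi k))\<^sup>2) = 1"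
    and rho: "corr_entry n d w rho = corr_entry n d w (\<lambda>k l. psi k * cnj (psi l))"
    using pure_state_corr_entry[OF assms(1)] by blast
  have "(\<Prod>s<n. cnj (gpauli (w s) (d s) (u s) (k s) (l s))) = (if k = l then 1 else 0)"
    if "k \<in> ?K" "l \<in> ?K" for k l
  proof -
    have "(\<Prod>s<n. cnj (gpauli (w s) (d s) (u s) (k s) (l s))) = (\<Prod>s<n. if k s = l s then 1 else 0)"
      using assms(2) basis_idx_less[OF that(1)] by (intro prod.cong refl) (auto simp: gpauli_identity)
    also have "\<dots> = (if k = l then 1 else 0)"
      using basis_idx_eqI[OF that] by (simp add: prod_if_zero)
    finally show ?thesis .
  qed
  then have "corr_entry n d w rho u = (\<Sum>k\<in>?K. \<Sum>l\<in>?K. if k = l then psi k * cnj (psi l) else 0)"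
    unfolding rho corr_entry_def by (intro sum.cong refl) simp
  also have "\<dots> = of_real (\<Sum>k\<in>?K. (cmod (psi k))\<^sup>2)"
    unfolding of_real_sum_cmod_sq by (simp add: finite_basis_idx)
  finally show ?thesis
    using unit by simp
qed

lemma pure_state_sum_sq_corr_entry:
  assumes "pure_state n d rho" "\<forall>r<n. primitive_root (w r) (d r)"
  shows "(\<Sum>u\<in>PiE {..<n} (\<lambda>r. {..<d r ^ 2}). (cmod (corr_entry n d w rho u))\<^sup>2) = (\<Prod>r<n. real (d r))"
proof -
  obtain psi where "(\<Sum>k\<in>basis_idx n d. (cmod (psi k))\<^sup>2) = 1"
    and "corr_entry n d w rho = corr_entry n d w (\<lambda>k l. psi k * cnj (psi l))"
    using pure_state_corr_entry[OF assms(1)] by blast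
  then show ?thesis
    using corr_entry_pure_sum_sq[OF assms(2)] by simp
qed

lemma pure_state_sum_sq_corr_entry_vanishing_at:
  assumes pure: "pure_state n d rho" and roots: "\<forall>r<n. primitive_root (w r) (d r)" and "s < n"
  shows "(\<Prod>r<n. real (d r)) / (real (d s))\<^sup>2
    \<le> (\<Sum>u\<in>{u \<in> PiE {..<n} (\<lambda>r. {..<d r ^ 2}). u s = 0}. (cmod (corr_entry n d w rho u))\<^sup>2)"
proof -
  obtain psi where unit: "(\<Sum>k\<in>basis_idx n d. (cmod (psi k))\<^sup>2) = 1"
    and rho: "corr_entry n d w rho = corr_entry n d w (\<lambda>k l. psi k * cnj (psi l))"
    using pure_state_corr_entry[OF pure] by blast
  let ?P = "\<Prod>r\<in>{..<n} - {s}. real (d r)"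
  have "0 < d s" using pure_state_dim_pos[OF pure \<open>s < n\<close>] .
  then have "{u \<in> PiE {..<n} (\<lambda>r. {..<d r ^ 2}). u s = 0} = PiE {..<n} (\<lambda>r. if r = s then {0} else {..<d r ^ 2})"
    using \<open>s < n\<close> by (intro PiE_fix_coordinate) auto
  then have "(\<Sum>u\<in>{u \<in> PiE {..<n} (\<lambda>r. {..<d r ^ 2}). u s = 0}. (cmod (corr_entry n d w rho u))\<^sup>2)
      = ?P * (\<Sum>a<d s. \<Sum>b<d s. (cmod (reduced_density n d s psi a b))\<^sup>2)"
    unfolding rho using corr_entry_pure_sum_sq_vanishing_at[OF roots \<open>s < n\<close>] by simp
  moreover have "?P * (1 / real (d s)) \<le> ?P * (\<Sum>a<d s. \<Sum>b<d s. (cmod (reduced_density n d s psi a b))\<^sup>2)"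
    using reduced_density_sum_sq_ge[OF \<open>s < n\<close> unit] by (intro mult_left_mono) (auto intro: prod_nonneg)
  moreover have "(\<Prod>r<n. real (d r)) = real (d s) * ?P"
    using \<open>s < n\<close> by (simp add: prod.remove)
  ultimately show ?thesis
    using \<open>0 < d s\<close> by (simp add: power2_eq_square)
qed

lemma pure_state_sum_sq_corr_entry_origin:
  assumes "pure_state n d rho"
  shows "(\<Sum>u\<in>{u \<in> PiE {..<n} (\<lambda>r. {..<d r ^ 2}). \<forall>s<n. u s = 0}. (cmod (corr_entry n d w rho u))\<^sup>2) = 1"
proof -
  let ?u0 = "restrict (\<lambda>_. 0::nat) {..<n}"
  have "{u \<in> PiE {..<n} (\<lambda>r. {..<d r ^ 2}). \<forall>s<n. u s = 0} = {?u0}"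
  proof (intro equalityI subsetI)
    fix u assume "u \<in> {u \<in> PiE {..<n} (\<lambda>r. {..<d r ^ 2}). \<forall>s<n. u s = 0}"
    then have "u = ?u0"
      using pure_state_dim_pos[OF assms] by (intro PiE_ext[of u "{..<n}"]) auto
    then show "u \<in> {?u0}" by simp
  next
    fix u assume "u \<in> {?u0}"
    then show "u \<in> {u \<in> PiE {..<n} (\<lambda>r. {..<d r ^ 2}). \<forall>s<n. u s = 0}"
      using pure_state_dim_pos[OF assms] by simp
  qed
  then show ?thesis
    using pure_state_corr_entry_identity[OF assms, of ?u0] by simp
qed

lemma card_vanishing_coords_mult_le:
  fixes x :: real
  assumes "0 \<le> x"
  shows "real (card {s\<in>{..<n}. u s = 0}) * x
    \<le> (real n - 1) * (if \<exists>s<n. u s = 0 then x else 0) + (if \<forall>s<n. u s = 0 then x else 0)"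
proof -
  let ?zeros = "card {s\<in>{..<n}. u s = 0}"
  consider "\<not> (\<exists>s<n. u s = 0)" | "\<exists>s<n. u s = 0" "\<forall>s<n. u s = 0" | "\<exists>s<n. u s = 0" "\<exists>s<n. u s \<noteq> 0"
    by blast
  then show ?thesis
  proof cases
    case 1
    then have "{s\<in>{..<n}. u s = 0} = {}" by auto
    with 1 assms show ?thesis by (simp only: card.empty) simp
  next
    case 2
    have "?zeros \<le> n"
      using card_mono[of "{..<n}" "{s\<in>{..<n}. u s = 0}"] by auto
    then have "real ?zeros * x \<le> real n * x"
      using assms by (intro mult_right_mono) auto
    with 2 show ?thesis
      by (simp add: algebra_simps)
  next
    case 3
    then obtain s where "s < n" "u s \<noteq> 0" by blast
    then have "{t\<in>{..<n}. u t = 0} \<subseteq> {..<n} - {s}" by auto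
    then have "?zeros \<le> n - 1"
      using card_mono[of "{..<n} - {s}"] \<open>s < n\<close> by simp
    then have "real ?zeros \<le> real n - 1"
      using \<open>s < n\<close> by linarith
    then have "real ?zeros * x \<le> (real n - 1) * x"
      using assms by (intro mult_right_mono)
    with 3 show ?thesis
      by auto
  qed
qed

lemma sum_vanishing_coords_le:
  fixes F :: "(nat \<Rightarrow> nat) \<Rightarrow> real"
  assumes "finite V" and "\<forall>u\<in>V. 0 \<le> F u"
  shows "(\<Sum>s<n. \<Sum>u\<in>{u\<in>V. u s = 0}. F u)
    \<le> (real n - 1) * (\<Sum>u\<in>{u\<in>V. \<exists>s<n. u s = 0}. F u) + (\<Sum>u\<in>{u\<in>V. \<forall>s<n. u s = 0}. F u)"
proof -
  have "(\<Sum>s<n. \<Sum>u\<in>{u\<in>V. u s = 0}. F u) = (\<Sum>s<n. \<Sum>u\<in>V. if u s = 0 then F u else 0)"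
    using \<open>finite V\<close> by (simp add: sum.inter_filter)
  also have "\<dots> = (\<Sum>u\<in>V. \<Sum>s<n. if u s = 0 then F u else 0)"
    by (rule sum.swap)
  also have "\<dots> = (\<Sum>u\<in>V. real (card {s\<in>{..<n}. u s = 0}) * F u)"
    by (intro sum.cong refl) (simp add: sum.inter_filter[symmetric])
  also have "\<dots> \<le> (\<Sum>u\<in>V. (real n - 1) * (if \<exists>s<n. u s = 0 then F u else 0)
                         + (if \<forall>s<n. u s = 0 then F u else 0))"
    using assms(2) by (intro sum_mono card_vanishing_coords_mult_le) simp
  also have "\<dots> = (real n - 1) * (\<Sum>u\<in>{u\<in>V. \<exists>s<n. u s = 0}. F u) + (\<Sum>u\<in>{u\<in>V. \<forall>s<n. u s = 0}. F u)"
    using \<open>finite V\<close> by (simp add: sum.distrib sum_distrib_left sum.inter_filter)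
  finally show ?thesis .
qed

lemma corr_idx_eq_Diff: "corr_idx n d = PiE {..<n} (\<lambda>r. {..<d r ^ 2}) - {u. \<exists>s<n. u s = 0}"
proof (rule set_eqI)
  fix u
  have "u s \<in> {1..<d s ^ 2} \<longleftrightarrow> u s \<in> {..<d s ^ 2} \<and> u s \<noteq> 0" for s by auto
  then show "u \<in> corr_idx n d \<longleftrightarrow> u \<in> PiE {..<n} (\<lambda>r. {..<d r ^ 2}) - {u. \<exists>s<n. u s = 0}"
    unfolding corr_idx_def PiE_iff Diff_iff mem_Collect_eq by blast
qed

theorem lemma3:
  fixes n :: nat and d :: "nat \<Rightarrow> nat" and w :: "nat \<Rightarrow> complex"
    and rho :: "(nat \<Rightarrow> nat) \<Rightarrow> (nat \<Rightarrow> nat) \<Rightarrow> complex"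
  assumes "n \<ge> 2"
    and "\<forall>s<n. d s \<ge> 2"
    and "\<forall>s<n. primitive_root (w s) (d s)"
    and "pure_state n d rho"
  shows "(\<Sum>u\<in>corr_idx n d. (cmod (corr_entry n d w rho u))\<^sup>2)
     \<le> ((\<Prod>s<n. real (d s)) * (real n - 1 - (\<Sum>s<n. 1 / (real (d s))\<^sup>2)) + 1) / (real n - 1)"
proof -
  let ?V = "PiE {..<n} (\<lambda>r. {..<d r ^ 2})"
  let ?F = "\<lambda>u. (cmod (corr_entry n d w rho u))\<^sup>2"
  define D where "D = (\<Prod>s<n. real (d s))"
  have total: "(\<Sum>u\<in>corr_idx n d. ?F u) + (\<Sum>u\<in>{u \<in> ?V. \<exists>s<n. u s = 0}. ?F u) = D"
    using sum.Int_Diff[of ?V ?F "{u. \<exists>s<n. u s = 0}"] pure_state_sum_sq_corr_entry[OF assms(4,3)]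
    by (simp add: corr_idx_eq_Diff D_def finite_PiE Int_def)
  have "D * (\<Sum>s<n. 1 / (real (d s))\<^sup>2) \<le> (\<Sum>s<n. \<Sum>u\<in>{u \<in> ?V. u s = 0}. ?F u)"
    unfolding sum_distrib_left D_def using pure_state_sum_sq_corr_entry_vanishing_at[OF assms(4,3)]
    by (intro sum_mono) simp
  also have "\<dots> \<le> (real n - 1) * (\<Sum>u\<in>{u \<in> ?V. \<exists>s<n. u s = 0}. ?F u) + 1"
    using sum_vanishing_coords_le[of ?V ?F n] pure_state_sum_sq_corr_entry_origin[OF assms(4)]
    by (simp add: finite_PiE)
  finally show ?thesis
    using assms(1) unfolding D_def[symmetric] total[symmetric] by (simp add: pos_le_divide_eq algebra_simps)
qed

end
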